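(* Let $m=pq$ with $p,q$ distinct primes. For each $n\ge2$ and each $i$ with $2\le i\le n$ there exists an edge-labeling $\alpha$ of the complete graph $K_n$ by ideals of $\mathbb{Z}/m\mathbb{Z}$ such that $\operatorname{rk}[\mathbb{Z}/m\mathbb{Z}]_{(K_n,\alpha)}=i$.
   Context: An edge-labeling assigns to each edge of a graph a nonzero proper ideal of $\mathbb{Z}/m\mathbb{Z}$. A spline on an edge-labeled graph $(G,\alpha)$ with vertices $v_1,\dots,v_n$ is a vector $(f_{v_1},\dots,f_{v_n})\in(\mathbb{Z}/m\mathbb{Z})^n$ with $f_{v_i}-f_{v_j}\in\alpha(v_iv_j)$ for every edge; the splines form a $\mathbb{Z}$-module $[\mathbb{Z}/m\mathbb{Z}]_{(G,\alpha)}$, whose rank $\operatorname{rk}$ is the smallest size of a generating set. *)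

theory Defs
  imports "HOL-Computational_Algebra.Primes"
begin

text \<open>Z/mZ is represented by the integers {0..<m}; arithmetic is taken mod m.\<close>

definition zmod_ideal :: "int \<Rightarrow> int set \<Rightarrow> bool" where
  "zmod_ideal m I \<longleftrightarrow> I \<subseteq> {0..<m} \<and> 0 \<in> I \<and>
     (\<forall>x\<in>I. \<forall>y\<in>I. (x + y) mod m \<in> I) \<and>
     (\<forall>r::int. \<forall>x\<in>I. (r * x) mod m \<in> I)"

definition nonzero_proper_ideal :: "int \<Rightarrow> int set \<Rightarrow> bool" where
  "nonzero_proper_ideal m I \<longleftrightarrow> zmod_ideal m I \<and> I \<noteq> {0} \<and> I \<noteq> {0..<m}"

definition edge_labeling_Kn :: "int \<Rightarrow> nat \<Rightarrow> (nat \<Rightarrow> nat \<Rightarrow> int set) \<Rightarrow> bool" where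
  "edge_labeling_Kn m n \<alpha> \<longleftrightarrow>
     (\<forall>i<n. \<forall>j<n. i \<noteq> j \<longrightarrow> \<alpha> i j = \<alpha> j i \<and> nonzero_proper_ideal m (\<alpha> i j))"

definition splines_Kn :: "int \<Rightarrow> nat \<Rightarrow> (nat \<Rightarrow> nat \<Rightarrow> int set) \<Rightarrow> (nat \<Rightarrow> int) set" where
  "splines_Kn m n \<alpha> = {f. (\<forall>v<n. f v \<in> {0..<m}) \<and> (\<forall>v. n \<le> v \<longrightarrow> f v = 0) \<and>
      (\<forall>i<n. \<forall>j<n. i \<noteq> j \<longrightarrow> (f i - f j) mod m \<in> \<alpha> i j)}"

definition zspan :: "int \<Rightarrow> nat \<Rightarrow> (nat \<Rightarrow> int) list \<Rightarrow> (nat \<Rightarrow> int) set" where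
  "zspan m n gs = {(\<lambda>v. if v < n then (\<Sum>k<length gs. c k * (gs ! k) v) mod m else 0) | c. True}"

definition spline_rank :: "int \<Rightarrow> nat \<Rightarrow> (nat \<Rightarrow> nat \<Rightarrow> int set) \<Rightarrow> nat" where
  "spline_rank m n \<alpha> = (LEAST k. \<exists>gs. length gs = k \<and> set gs \<subseteq> splines_Kn m n \<alpha> \<and>
       zspan m n gs = splines_Kn m n \<alpha>)"

end

theory Submission
  imports Defs "HOL-Library.FuncSet"
begin

text \<open>Split the vertices into \<open>k \<ge> 2\<close> classes and label an edge by \<open>(p)\<close> if its ends lie in
  the same class and by \<open>(q)\<close> otherwise, where \<open>m = p q\<close> with \<open>p, q\<close> coprime. Any two
  vertices are joined by a path of \<open>(q)\<close>-edges, so a spline is constant modulo \<open>q\<close> and,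
  on each class, constant modulo \<open>p\<close>; by the Chinese remainder theorem it is therefore
  \<open>c + q u(class)\<close>, and the constant \<open>1\<close> together with \<open>q\<close> times the indicators of all
  classes but one generate. Conversely, reducing modulo \<open>p\<close>, the splines \<open>q u(class)\<close>
  give \<open>p\<^sup>k\<close> distinct vectors, while the span of \<open>j\<close> vectors has at most \<open>p\<^sup>j\<close>
  reductions; hence the rank is exactly \<open>k\<close>.\<close>

definition principal_ideal :: "int \<Rightarrow> int \<Rightarrow> int set" where
  "principal_ideal m d = {y \<in> {0..<m}. d dvd y}"

lemma mod_in_principal_ideal_iff:
  fixes d m x :: int
  assumes "d dvd m" "0 < m"
  shows "x mod m \<in> principal_ideal m d \<longleftrightarrow> d dvd x"
  using assms by (simp add: principal_ideal_def dvd_mod_iff)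

lemma nonzero_proper_principal_ideal:
  fixes d m :: int
  assumes "d dvd m" "1 < d" "d < m"
  shows "nonzero_proper_ideal m (principal_ideal m d)"
proof -
  have "zmod_ideal m (principal_ideal m d)"
    using assms unfolding zmod_ideal_def principal_ideal_def by (auto simp: dvd_mod_iff)
  moreover have "d \<in> principal_ideal m d"
    using assms by (simp add: principal_ideal_def)
  moreover have "1 \<in> {0..<m}" "1 \<notin> principal_ideal m d"
    using assms by (auto simp: principal_ideal_def zdvd1_eq)
  ultimately show ?thesis
    unfolding nonzero_proper_ideal_def using assms by fastforce
qed

lemma zmod_ideal_mod_sum:
  fixes c x :: "'a \<Rightarrow> int"
  assumes "zmod_ideal m I" "finite A" "\<And>k. k \<in> A \<Longrightarrow> x k mod m \<in> I"
  shows "(\<Sum>k\<in>A. c k * x k) mod m \<in> I"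
  using assms(2,3)
proof (induction A rule: finite_induct)
  case empty
  then show ?case using assms(1) by (simp add: zmod_ideal_def)
next
  case (insert a A)
  have "(c a * (x a mod m)) mod m \<in> I"
    using assms(1) insert.prems by (simp add: zmod_ideal_def)
  then have "(c a * x a) mod m \<in> I" by (simp add: mod_mult_right_eq)
  moreover have "(\<Sum>k\<in>A. c k * x k) mod m \<in> I" using insert by simp
  ultimately have "((c a * x a) mod m + (\<Sum>k\<in>A. c k * x k) mod m) mod m \<in> I"
    using assms(1) by (simp add: zmod_ideal_def)
  then show ?case using insert.hyps by (simp add: mod_add_eq)
qed

lemma zspan_subset_splines:
  assumes "edge_labeling_Kn m n \<alpha>" "0 < m" "set gs \<subseteq> splines_Kn m n \<alpha>"
  shows "zspan m n gs \<subseteq> splines_Kn m n \<alpha>"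
proof
  fix f assume "f \<in> zspan m n gs"
  then obtain c where f: "f = (\<lambda>v. if v < n then (\<Sum>k<length gs. c k * (gs ! k) v) mod m else 0)"
    unfolding zspan_def by blast
  have "(f a - f b) mod m \<in> \<alpha> a b" if "a < n" "b < n" "a \<noteq> b" for a b
  proof -
    have ideal: "zmod_ideal m (\<alpha> a b)"
      using assms(1) that unfolding edge_labeling_Kn_def nonzero_proper_ideal_def by blast
    have "((gs ! k) a - (gs ! k) b) mod m \<in> \<alpha> a b" if "k < length gs" for k
      using assms(3) nth_mem[OF that] \<open>a < n\<close> \<open>b < n\<close> \<open>a \<noteq> b\<close>
      unfolding splines_Kn_def by blast
    then have "(\<Sum>k<length gs. c k * ((gs ! k) a - (gs ! k) b)) mod m \<in> \<alpha> a b"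
      by (intro zmod_ideal_mod_sum[OF ideal]) auto
    moreover have "(f a - f b) mod m = (\<Sum>k<length gs. c k * ((gs ! k) a - (gs ! k) b)) mod m"
      using that by (simp add: f mod_diff_eq sum_subtractf right_diff_distrib)
    ultimately show ?thesis by simp
  qed
  then show "f \<in> splines_Kn m n \<alpha>" using assms(2) by (auto simp: splines_Kn_def f)
qed

lemma zspan_mod_image:
  assumes "p dvd m"
  shows "(\<lambda>x v. x v mod p) ` zspan m n gs = zspan p n gs"
proof -
  have "zspan d n gs = range (\<lambda>c v. if v < n then (\<Sum>k<length gs. c k * (gs ! k) v) mod d else 0)"
    for d
    unfolding zspan_def by auto
  then show ?thesis
    by (simp add: image_image) (auto simp: fun_eq_iff mod_mod_cancel[OF assms] intro!: arg_cong[where f = range])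
qed

lemma mod_sum_mod_coeff:
  fixes c g :: "'a \<Rightarrow> int"
  shows "(\<Sum>k\<in>A. (c k mod p) * g k) mod p = (\<Sum>k\<in>A. c k * g k) mod p"
proof -
  have "(\<Sum>k\<in>A. (c k mod p) * g k) mod p = (\<Sum>k\<in>A. (c k mod p) * g k mod p) mod p"
    by (simp add: mod_sum_eq)
  also have "\<dots> = (\<Sum>k\<in>A. c k * g k mod p) mod p"
    by (simp add: mod_mult_left_eq)
  also have "\<dots> = (\<Sum>k\<in>A. c k * g k) mod p"
    by (simp add: mod_sum_eq)
  finally show ?thesis .
qed

lemma zspan_eq_image_PiE:
  assumes "0 < p"
  shows "zspan p n gs = (\<lambda>c v. if v < n then (\<Sum>k<length gs. c k * (gs ! k) v) mod p else 0)
     ` PiE {..<length gs} (\<lambda>_. {0..<p})"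
  (is "_ = ?comb ` ?C")
proof
  show "?comb ` ?C \<subseteq> zspan p n gs" unfolding zspan_def by blast
  show "zspan p n gs \<subseteq> ?comb ` ?C"
  proof
    fix x assume "x \<in> zspan p n gs"
    then obtain c where x: "x = ?comb c" unfolding zspan_def by blast
    define c' where "c' = restrict (\<lambda>k. c k mod p) {..<length gs}"
    have "(\<Sum>k<length gs. c' k * (gs ! k) v) = (\<Sum>k<length gs. (c k mod p) * (gs ! k) v)" for v
      unfolding c'_def by (intro sum.cong) auto
    then have "x = ?comb c'" by (simp add: x fun_eq_iff mod_sum_mod_coeff)
    moreover have "c' \<in> ?C" unfolding c'_def using assms by auto
    ultimately show "x \<in> ?comb ` ?C" by blast
  qed
qed

lemma card_zspan_le:
  assumes "0 < p"
  shows "finite (zspan p n gs)" "card (zspan p n gs) \<le> nat p ^ length gs"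
proof -
  have "card (PiE {..<length gs} (\<lambda>_. {0..<p})) = nat p ^ length gs"
    by (simp add: card_PiE)
  then show "finite (zspan p n gs)" "card (zspan p n gs) \<le> nat p ^ length gs"
    unfolding zspan_eq_image_PiE[OF assms] by (auto intro: card_image_le[THEN order_trans] finite_PiE)
qed

locale class_labeling =
  fixes p q m :: int and n k :: nat and cls :: "nat \<Rightarrow> nat"
  assumes p_gt_1: "1 < p" and q_gt_1: "1 < q" and coprime_pq: "coprime p q"
    and m_eq: "m = p * q"
    and cls_image: "cls ` {..<n} = {..<k}" and two_le_k: "2 \<le> k"
begin

definition labeling :: "nat \<Rightarrow> nat \<Rightarrow> int set" where
  "labeling a b = (if cls a = cls b then principal_ideal m p else principal_ideal m q)"

lemma p_dvd_m: "p dvd m" and q_dvd_m: "q dvd m"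
  by (simp_all add: m_eq)

lemma p_less_m: "p < m" and q_less_m: "q < m" and m_pos: "0 < m"
  using p_gt_1 q_gt_1 by (simp_all add: m_eq)

lemma edge_labeling: "edge_labeling_Kn m n labeling"
  unfolding edge_labeling_Kn_def labeling_def
  using nonzero_proper_principal_ideal[OF p_dvd_m p_gt_1 p_less_m]
    nonzero_proper_principal_ideal[OF q_dvd_m q_gt_1 q_less_m]
  by auto

lemma cls_less: "v < n \<Longrightarrow> cls v < k"
  using cls_image by auto

definition rep :: "nat \<Rightarrow> nat" where
  "rep = inv_into {..<n} cls"

lemma
  assumes "s < k"
  shows rep_less: "rep s < n" and cls_rep: "cls (rep s) = s"
proof -
  have s: "s \<in> cls ` {..<n}" using assms cls_image by simp
  show "rep s < n" using inv_into_into[OF s] by (simp add: rep_def)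
  show "cls (rep s) = s" using f_inv_into_f[OF s] by (simp add: rep_def)
qed

lemma exists_other_class:
  assumes "v < n"
  obtains w where "w < n" "cls w \<noteq> cls v"
proof -
  define s :: nat where "s = (if cls v = 0 then 1 else 0)"
  have "s < k" using two_le_k by (simp add: s_def)
  then show thesis using that[of "rep s"] rep_less cls_rep by (auto simp: s_def)
qed

lemma splines_iff:
  "f \<in> splines_Kn m n labeling \<longleftrightarrow>
     (\<forall>v. n \<le> v \<longrightarrow> f v = 0) \<and> (\<forall>v<n. 0 \<le> f v \<and> f v < m) \<and>
     (\<forall>a<n. \<forall>b<n. q dvd f a - f b) \<and> (\<forall>a<n. \<forall>b<n. cls a = cls b \<longrightarrow> p dvd f a - f b)"
    (is "_ \<longleftrightarrow> ?zero \<and> ?range \<and> ?q_const \<and> ?p_classes")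
proof
  assume f: "f \<in> splines_Kn m n labeling"
  have edge: "(if cls a = cls b then p else q) dvd f a - f b" if "a < n" "b < n" for a b
  proof (cases "a = b")
    case False
    then have "(f a - f b) mod m \<in> labeling a b"
      using f that unfolding splines_Kn_def by blast
    then show ?thesis
      using mod_in_principal_ideal_iff[OF p_dvd_m m_pos] mod_in_principal_ideal_iff[OF q_dvd_m m_pos]
      by (cases "cls a = cls b") (simp_all add: labeling_def)
  qed simp
  have ?q_const
  proof (intro allI impI)
    fix a b assume "a < n" "b < n"
    obtain w where w: "w < n" "cls w \<noteq> cls a" using exists_other_class[OF \<open>a < n\<close>] .
    show "q dvd f a - f b"
    proof (cases "cls a = cls b")
      case True
      then have "q dvd f a - f w" "q dvd f b - f w"
        using edge[of a w] edge[of b w] w \<open>a < n\<close> \<open>b < n\<close> by auto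
      then have "q dvd (f a - f w) - (f b - f w)" by (rule dvd_diff)
      then show ?thesis by simp
    next
      case False
      then show ?thesis using edge[of a b] \<open>a < n\<close> \<open>b < n\<close> by simp
    qed
  qed
  moreover have ?p_classes
  proof (intro allI impI)
    fix a b assume "a < n" "b < n" "cls a = cls b"
    then show "p dvd f a - f b" using edge[of a b] by simp
  qed
  ultimately show "?zero \<and> ?range \<and> ?q_const \<and> ?p_classes"
    using f unfolding splines_Kn_def by auto
next
  assume "?zero \<and> ?range \<and> ?q_const \<and> ?p_classes"
  then show "f \<in> splines_Kn m n labeling"
    unfolding splines_Kn_def labeling_def
    using mod_in_principal_ideal_iff[OF p_dvd_m m_pos] mod_in_principal_ideal_iff[OF q_dvd_m m_pos]
    by auto
qed

definition generator :: "nat \<Rightarrow> nat \<Rightarrow> int" where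
  "generator t v = (if n \<le> v then 0 else if t = 0 then 1 else if cls v = t then q else 0)"

definition generators :: "(nat \<Rightarrow> int) list" where
  "generators = map generator [0..<k]"

lemma generator_in_splines: "generator t \<in> splines_Kn m n labeling"
  unfolding splines_iff generator_def using q_gt_1 q_less_m by auto

lemma set_generators_subset: "set generators \<subseteq> splines_Kn m n labeling"
  using generator_in_splines by (auto simp: generators_def)

lemma sum_generators:
  assumes "v < n"
  shows "(\<Sum>t<k. c t * generator t v) = c 0 + (if cls v = 0 then 0 else c (cls v) * q)"
proof -
  have "(\<Sum>t<k. c t * generator t v)
      = (\<Sum>t<k. (if t = 0 then c 0 else 0) +
                  (if t = cls v then (if cls v = 0 then 0 else c (cls v) * q) else 0))"
    using assms by (intro sum.cong) (auto simp: generator_def)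
  also have "\<dots> = c 0 + (if cls v = 0 then 0 else c (cls v) * q)"
    using two_le_k cls_less[OF assms] by (simp add: sum.distrib)
  finally show ?thesis .
qed

lemma splines_subset_zspan: "splines_Kn m n labeling \<subseteq> zspan m n generators"
proof
  fix f assume f: "f \<in> splines_Kn m n labeling"
  define c where "c t = (if t = 0 then f (rep 0) else (f (rep t) - f (rep 0)) div q)" for t
  have "f v = (\<Sum>t<k. c t * generator t v) mod m" if "v < n" for v
  proof -
    define s where "s = cls v"
    have s: "s < k" "rep s < n" "cls (rep s) = cls v"
      using cls_less[OF that] rep_less cls_rep by (auto simp: s_def)
    have "q dvd f (rep s) - f (rep 0)"
      using f two_le_k rep_less s by (simp add: splines_iff)
    then have sum: "(\<Sum>t<k. c t * generator t v) = f (rep s)"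
      by (simp add: sum_generators[OF that] c_def s_def)
    have "p dvd f v - f (rep s)" "q dvd f v - f (rep s)"
      using f that s by (simp_all add: splines_iff)
    then have "m dvd f v - f (rep s)"
      using coprime_pq by (simp add: m_eq divides_mult)
    then have "f v mod m = f (rep s) mod m"
      by (simp add: mod_eq_dvd_iff)
    moreover have "f v mod m = f v"
      using f that by (simp add: splines_iff)
    ultimately show ?thesis using sum by simp
  qed
  moreover have "f v = 0" if "\<not> v < n" for v
    using f that by (simp add: splines_iff)
  ultimately have "f = (\<lambda>v. if v < n then (\<Sum>t<length generators. c t * (generators ! t) v) mod m else 0)"
    by (auto simp: generators_def)
  then show "f \<in> zspan m n generators"
    unfolding zspan_def by blast
qed

lemma zspan_generators: "zspan m n generators = splines_Kn m n labeling"
  using zspan_subset_splines[OF edge_labeling m_pos set_generators_subset] splines_subset_zspan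
  by (rule antisym)

definition class_spline :: "(nat \<Rightarrow> int) \<Rightarrow> nat \<Rightarrow> int" where
  "class_spline u v = (if v < n then (q * u (cls v)) mod m else 0)"

lemma class_spline_in_splines: "class_spline u \<in> splines_Kn m n labeling"
  unfolding splines_iff class_spline_def
  using m_pos mod_mod_cancel[OF p_dvd_m] mod_mod_cancel[OF q_dvd_m]
  by (auto simp: mod_eq_dvd_iff[symmetric] mod_mult_right_eq)

lemma inj_on_class_spline_mod:
  "inj_on (\<lambda>u v. class_spline u v mod p) (PiE {..<k} (\<lambda>_. {0..<p}))"
proof (rule inj_onI)
  fix u u' assume u: "u \<in> PiE {..<k} (\<lambda>_. {0..<p})" and u': "u' \<in> PiE {..<k} (\<lambda>_. {0..<p})"
    and eq: "(\<lambda>v. class_spline u v mod p) = (\<lambda>v. class_spline u' v mod p)"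
  show "u = u'"
  proof (rule PiE_ext[OF u u'])
    fix s assume "s \<in> {..<k}"
    then have "(q * u s) mod p = (q * u' s) mod p"
      using fun_cong[OF eq, of "rep s"] rep_less cls_rep
      by (simp add: class_spline_def mod_mod_cancel[OF p_dvd_m])
    then have "p dvd q * (u s - u' s)"
      by (simp add: mod_eq_dvd_iff right_diff_distrib)
    then have "p dvd u s - u' s"
      by (simp add: coprime_dvd_mult_right_iff[OF coprime_pq])
    then have "u s mod p = u' s mod p"
      by (simp add: mod_eq_dvd_iff)
    moreover have "u s \<in> {0..<p}" "u' s \<in> {0..<p}"
      using u u' \<open>s \<in> {..<k}\<close> by (simp_all add: PiE_iff)
    ultimately show "u s = u' s" by simp
  qed
qed

lemma generating_list_length_ge:
  assumes "zspan m n gs = splines_Kn m n labeling"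
  shows "k \<le> length gs"
proof -
  let ?U = "PiE {..<k} (\<lambda>_. {0..<p})"
  let ?reduce = "\<lambda>x v. x v mod p"
  have "class_spline ` ?U \<subseteq> zspan m n gs"
    using class_spline_in_splines assms by auto
  then have "?reduce ` class_spline ` ?U \<subseteq> zspan p n gs"
    unfolding zspan_mod_image[OF p_dvd_m, symmetric] by (rule image_mono)
  then have "card (?reduce ` class_spline ` ?U) \<le> card (zspan p n gs)"
    using card_zspan_le(1) p_gt_1 by (simp add: card_mono)
  also have "\<dots> \<le> nat p ^ length gs"
    using card_zspan_le(2) p_gt_1 by simp
  finally have "card (?reduce ` class_spline ` ?U) \<le> nat p ^ length gs" .
  moreover have "card (?reduce ` class_spline ` ?U) = nat p ^ k"
    using card_image[OF inj_on_class_spline_mod] by (simp add: image_comp card_PiE o_def)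
  ultimately have "nat p ^ k \<le> nat p ^ length gs" by simp
  then show ?thesis
    using p_gt_1 by (simp add: power_le_imp_le_exp)
qed

theorem spline_rank_labeling: "spline_rank m n labeling = k"
  unfolding spline_rank_def
proof (rule Least_equality)
  show "\<exists>gs. length gs = k \<and> set gs \<subseteq> splines_Kn m n labeling \<and> zspan m n gs = splines_Kn m n labeling"
    using zspan_generators set_generators_subset by (intro exI[of _ generators]) (simp add: generators_def)
qed (use generating_list_length_ge in blast)

end

theorem mainTheorem12:
  fixes p q m :: int and n i :: nat
  assumes "prime p" and "prime q" and "p \<noteq> q" and "m = p * q"
    and "2 \<le> n" and "2 \<le> i" and "i \<le> n"
  shows "\<exists>\<alpha>. edge_labeling_Kn m n \<alpha> \<and> spline_rank m n \<alpha> = i"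
proof -
  \<comment> \<open>truncated subtraction puts the first \<open>n - i + 1\<close> vertices into class \<open>0\<close>\<close>
  define cls :: "nat \<Rightarrow> nat" where "cls v = v - (n - i)" for v
  have "cls ` {..<n} = {..<i}"
  proof
    show "cls ` {..<n} \<subseteq> {..<i}" using \<open>2 \<le> i\<close> by (auto simp: cls_def)
    show "{..<i} \<subseteq> cls ` {..<n}"
    proof
      fix s assume "s \<in> {..<i}"
      then have "s + (n - i) < n" "cls (s + (n - i)) = s" using \<open>i \<le> n\<close> by (auto simp: cls_def)
      then show "s \<in> cls ` {..<n}" by (metis imageI lessThan_iff)
    qed
  qed
  moreover have "coprime p q"
    using assms(1-3) by (simp add: primes_coprime)
  ultimately interpret class_labeling p q m n i cls
    using assms by unfold_locales (auto simp: prime_gt_1_int)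
  show ?thesis
    using edge_labeling spline_rank_labeling by blast
qed

end
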